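(* In the setting of the context, assume that $Q$ is a Poisson tensor. Then $Q-\lambda P$ is a Poisson pencil (i.e. $[Q,P]_S=0$) if and only if \[ \sum_{a=1}^k X'_a\wedge L_{Z_a}(P)=0 . \] In fact $[Q,P]_S=\sum_{a=1}^kX'_a\wedge L_{Z_a}(P)$.
   Context: $M$ is a smooth manifold of dimension $2n+k$ carrying two compatible Poisson tensors $P,P'$ (i.e. $P'-\lambda P$ is Poisson for every $\lambda$; equivalently the Schouten brackets $[P,P]_S,[P',P']_S,[P,P']_S$ vanish). Brackets: $\{f,g\}=\langle df,P\,dg\rangle$, $\{f,g\}'=\langle df,P'dg\rangle$; bivectors are viewed as maps $T^*M\to TM$. There are $k$ polynomial Casimirs of the pencil $H^{(j)}(\lambda)=\sum_{i=0}^{n_j}H^{(j)}_i\lambda^{n_j-i}$, i.e. $(P'-\lambda P)dH^{(j)}(\lambda)=0$ identically in $\lambda$, with $n_1+\dots+n_k=n$ and all $dH^{(j)}_s$ linearly independent at every point. $S$ is a symplectic leaf of $P$ (locally a level set of $H^{(1)}_0,\dots,H^{(k)}_0$), $U_S$ a tubular neighbourhood of $S$, and $Z_1,\dots,Z_k$ vector fields on $U_S$ spanning a distribution complementary to the tangent spaces of the symplectic leaves of $P$, normalized by $Z_a(H^{(b)}_0)=\delta_a^b$. Set $X'_a=P'dH^{(a)}_0$ and $Q=P'-\sum_{a=1}^kX'_a\wedge Z_a$, i.e. $Q(\alpha)=P'(\alpha)+\sum_a(\langle\alpha,X'_a\rangle Z_a-\langle\alpha,Z_a\rangle X'_a)$.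 "$Q-\lambda P$ is a Poisson pencil" means $Q-\lambda P$ is a Poisson tensor for every $\lambda$. *)

theory Defs
  imports "HOL-Analysis.Analysis"
begin

text \<open>Local coordinate calculus on an open domain U of R^N (N = CARD('n)).
  Functions are maps real^'n => real; vector fields real^'n => real^'n;
  bivector fields real^'n => real^'n^'n (components B x $ i $ j, viewed as maps
  T*M -> TM via alpha |-> B *v alpha); trivector fields real^'n => 'n => 'n => 'n => real.\<close>

definition pd :: "'n::finite \<Rightarrow> (real^'n \<Rightarrow> real) \<Rightarrow> real^'n \<Rightarrow> real" where
  "pd i f x = frechet_derivative f (at x) (axis i 1)"

fun Dl :: "'n::finite list \<Rightarrow> (real^'n \<Rightarrow> real) \<Rightarrow> real^'n \<Rightarrow> real" where
  "Dl [] f = f"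
| "Dl (i # is) f = pd i (Dl is f)"

definition cinf_on :: "(real^'n::finite) set \<Rightarrow> (real^'n \<Rightarrow> real) \<Rightarrow> bool" where
  "cinf_on U f \<longleftrightarrow> (\<forall>is. \<forall>x\<in>U. Dl is f differentiable (at x))"

definition grad :: "(real^'n::finite \<Rightarrow> real) \<Rightarrow> real^'n \<Rightarrow> real^'n" where
  "grad f x = (\<chi> s. pd s f x)"

definition vfield_on :: "(real^'n::finite) set \<Rightarrow> (real^'n \<Rightarrow> real^'n) \<Rightarrow> bool" where
  "vfield_on U V \<longleftrightarrow> (\<forall>i. cinf_on U (\<lambda>x. V x $ i))"

definition bivector_on :: "(real^'n::finite) set \<Rightarrow> (real^'n \<Rightarrow> real^'n^'n) \<Rightarrow> bool" where
  "bivector_on U B \<longleftrightarrow> (\<forall>i j. cinf_on U (\<lambda>x. B x $ i $ j)) \<and>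
     (\<forall>x\<in>U. \<forall>i j. B x $ i $ j = - B x $ j $ i)"

text \<open>Schouten bracket of two bivector fields in coordinates; with this sign
  convention [P,P] = 0 is the Jacobi identity for P and [X,P] relates to L_X P
  so that [X wedge Z, P] = L_X P wedge Z - X wedge L_Z P.\<close>
definition schouten :: "(real^'n::finite \<Rightarrow> real^'n^'n) \<Rightarrow> (real^'n \<Rightarrow> real^'n^'n)
    \<Rightarrow> real^'n \<Rightarrow> 'n \<Rightarrow> 'n \<Rightarrow> 'n \<Rightarrow> real" where
  "schouten A B x i j k =
     (let t = (\<lambda>i j k. \<Sum>l\<in>UNIV. A x $ l $ i * pd l (\<lambda>y. B y $ j $ k) x
                              + B x $ l $ i * pd l (\<lambda>y. A y $ j $ k) x)
      in t i j k + t j k i + t k i j)"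

definition poisson_on :: "(real^'n::finite) set \<Rightarrow> (real^'n \<Rightarrow> real^'n^'n) \<Rightarrow> bool" where
  "poisson_on U P \<longleftrightarrow> bivector_on U P \<and> (\<forall>x\<in>U. \<forall>i j k. schouten P P x i j k = 0)"

definition sharp :: "(real^'n::finite \<Rightarrow> real^'n^'n) \<Rightarrow> (real^'n \<Rightarrow> real) \<Rightarrow> real^'n \<Rightarrow> real^'n" where
  "sharp P H x = P x *v grad H x"

text \<open>X wedge Z, with (X wedge Z)(alpha) = <alpha,X> Z - <alpha,Z> X.\<close>
definition wedge2 :: "(real^'n::finite \<Rightarrow> real^'n) \<Rightarrow> (real^'n \<Rightarrow> real^'n) \<Rightarrow> real^'n \<Rightarrow> real^'n^'n" where
  "wedge2 X Z x = (\<chi> i j. X x $ i * Z x $ j - X x $ j * Z x $ i)"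

definition wedge3 :: "(real^'n::finite \<Rightarrow> real^'n) \<Rightarrow> (real^'n \<Rightarrow> real^'n^'n)
    \<Rightarrow> real^'n \<Rightarrow> 'n \<Rightarrow> 'n \<Rightarrow> 'n \<Rightarrow> real" where
  "wedge3 X B x i j k = X x $ i * B x $ j $ k + X x $ j * B x $ k $ i + X x $ k * B x $ i $ j"

definition lie_bv :: "(real^'n::finite \<Rightarrow> real^'n) \<Rightarrow> (real^'n \<Rightarrow> real^'n^'n) \<Rightarrow> real^'n \<Rightarrow> real^'n^'n" where
  "lie_bv Z P x = (\<chi> i j. \<Sum>l\<in>UNIV. Z x $ l * pd l (\<lambda>y. P y $ i $ j) x
                     - P x $ l $ j * pd l (\<lambda>y. Z y $ i) x
                     - P x $ i $ l * pd l (\<lambda>y. Z y $ j) x)"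

definition casimir_poly :: "('k \<Rightarrow> nat \<Rightarrow> real^'n::finite \<Rightarrow> real) \<Rightarrow> ('k \<Rightarrow> nat) \<Rightarrow> 'k \<Rightarrow> real
    \<Rightarrow> real^'n \<Rightarrow> real" where
  "casimir_poly H m a lam y = (\<Sum>i\<le>m a. H a i y * lam ^ (m a - i))"

end

theory Submission
  imports Defs "HOL-Computational_Algebra.Polynomial"
begin

(*
  Comparing the coefficients of lam^(n+1) shows that the leading coefficient H_0 of a
  polynomial Casimir of P' - lam P is a Casimir of P, and the pencil condition at lam = 1 gives
  [P',P] = 0. Together they make X' = P' dH_0 an infinitesimal automorphism of P, L_X' P = 0;
  in coordinates this rests on the symmetry of the Hessian of H_0. Expanding
  [Q,P] = [P',P] - sum_a [X'_a wedge Z_a, P] with the Leibniz rule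
  [X wedge Z, P] = Z wedge L_X P - X wedge L_Z P therefore leaves sum_a X'_a wedge L_Z_a P.
  Since Q and P are Poisson, [Q - lam P, Q - lam P] = -2 lam [Q,P], whence the equivalence.
*)

section \<open>Partial derivatives\<close>

lemma pd_eq_derivative: "(f has_derivative f') (at x) \<Longrightarrow> pd i f x = f' (axis i 1)"
  unfolding pd_def by (metis frechet_derivative_at)

lemma pd_diff:
  assumes "f differentiable (at x)" "g differentiable (at x)"
  shows "pd i (\<lambda>y. f y - g y) x = pd i f x - pd i g x"
  using pd_eq_derivative[OF has_derivative_diff[OF assms[unfolded frechet_derivative_works]]]
  by (simp add: pd_def)

lemma pd_mult:
  assumes "f differentiable (at x)" "g differentiable (at x)"
  shows "pd i (\<lambda>y. f y * g y) x = pd i f x * g x + f x * pd i g x"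
  using pd_eq_derivative[OF has_derivative_mult[OF assms[unfolded frechet_derivative_works]]]
  by (simp add: pd_def)

lemma pd_sum:
  assumes "finite S" "\<And>a. a \<in> S \<Longrightarrow> f a differentiable (at x)"
  shows "pd i (\<lambda>y. \<Sum>a\<in>S. f a y) x = (\<Sum>a\<in>S. pd i (f a) x)"
  using pd_eq_derivative[OF has_derivative_sum[OF assms(2)[unfolded frechet_derivative_works]]]
  by (simp add: pd_def)

lemma pd_const: "pd i (\<lambda>y. c) x = 0"
  by (rule trans[OF pd_eq_derivative[OF has_derivative_const]]) simp

lemma pd_cmult: "f differentiable (at x) \<Longrightarrow> pd i (\<lambda>y. c * f y) x = c * pd i f x"
  by (simp add: pd_mult pd_const)

lemma pd_mult_const: "f differentiable (at x) \<Longrightarrow> pd i (\<lambda>y. f y * c) x = pd i f x * c"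
  using pd_cmult[of f x i c] by (simp add: mult.commute)

lemma pd_uminus: "f differentiable (at x) \<Longrightarrow> pd i (\<lambda>y. - f y) x = - pd i f x"
  using pd_cmult[of f x i "- 1"] by simp

lemma differentiable_cong_open:
  assumes "open U" "x \<in> U" "\<And>y. y \<in> U \<Longrightarrow> f y = g y" "g differentiable (at x)"
  shows "f differentiable (at x)"
proof -
  obtain D where "(g has_derivative D) (at x)"
    using assms(4) unfolding differentiable_def by blast
  then have "(f has_derivative D) (at x)"
    by (rule has_derivative_transform_within_open[OF _ assms(1,2)]) (simp add: assms(3))
  then show ?thesis
    unfolding differentiable_def by blast
qed

lemma pd_cong_open:
  assumes "open U" "x \<in> U" "\<And>y. y \<in> U \<Longrightarrow> f y = g y" "g differentiable (at x)"
  shows "pd i f x = pd i g x"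
proof -
  have "(f has_derivative frechet_derivative g (at x)) (at x)"
    using assms(4) unfolding frechet_derivative_works
    by (rule has_derivative_transform_within_open[OF _ assms(1,2)]) (simp add: assms(3))
  then show ?thesis
    unfolding pd_def by (metis frechet_derivative_at)
qed

lemma cinf_on_differentiable: "cinf_on U f \<Longrightarrow> x \<in> U \<Longrightarrow> f differentiable (at x)"
  unfolding cinf_on_def by (metis Dl.simps(1))

lemma cinf_on_pd_differentiable: "cinf_on U f \<Longrightarrow> x \<in> U \<Longrightarrow> pd i f differentiable (at x)"
  unfolding cinf_on_def by (metis Dl.simps)

lemma cinf_on_diff_cmult:
  assumes U: "open U" and f: "cinf_on U f" and g: "cinf_on U g"
  shows "cinf_on U (\<lambda>y. f y - c * g y)"
proof -
  have "\<forall>x\<in>U. Dl is (\<lambda>y. f y - c * g y) x = Dl is f x - c * Dl is g x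
      \<and> Dl is (\<lambda>y. f y - c * g y) differentiable (at x)" for "is"
  proof (induction "is")
    case Nil
    show ?case using f g cinf_on_differentiable by (auto intro!: derivative_intros)
  next
    case (Cons i "is")
    have d: "Dl is f differentiable (at x)" "Dl is g differentiable (at x)"
      "pd i (Dl is f) differentiable (at x)" "pd i (Dl is g) differentiable (at x)" if "x \<in> U" for x
      using f g that unfolding cinf_on_def by (metis Dl.simps(2))+
    have eq: "Dl (i # is) (\<lambda>y. f y - c * g y) x = Dl (i # is) f x - c * Dl (i # is) g x"
      if x: "x \<in> U" for x
    proof -
      have "Dl (i # is) (\<lambda>y. f y - c * g y) x = pd i (\<lambda>y. Dl is f y - c * Dl is g y) x"
        using Cons.IH d[OF x] by (simp, intro pd_cong_open[OF U x]) (auto intro!: derivative_intros)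
      also have "\<dots> = Dl (i # is) f x - c * Dl (i # is) g x"
        using d[OF x] by (simp add: pd_diff pd_cmult differentiable_mult)
      finally show ?thesis .
    qed
    have "Dl (i # is) (\<lambda>y. f y - c * g y) differentiable (at x)" if x: "x \<in> U" for x
      by (rule differentiable_cong_open[OF U x eq]) (use d[OF x] in \<open>auto intro!: derivative_intros\<close>)
    with eq show ?case by blast
  qed
  then show ?thesis unfolding cinf_on_def by blast
qed

section \<open>Symmetry of second partial derivatives\<close>

lemma has_derivative_along_line:
  fixes f :: "'a::real_normed_vector \<Rightarrow> real"
  assumes "f differentiable (at (a + s *\<^sub>R v))"
  shows "((\<lambda>t. f (a + t *\<^sub>R v)) has_derivative
      (\<lambda>t. t * frechet_derivative f (at (a + s *\<^sub>R v)) v)) (at s)"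
proof -
  let ?D = "frechet_derivative f (at (a + s *\<^sub>R v))"
  have line: "((\<lambda>t. a + t *\<^sub>R v) has_derivative (\<lambda>t. t *\<^sub>R v)) (at s)"
    by (auto intro!: derivative_eq_intros)
  have D: "(f has_derivative ?D) (at (a + s *\<^sub>R v))"
    using assms frechet_derivative_works by blast
  have "?D (t *\<^sub>R v) = t * ?D v" for t
    using linear_cmul[OF has_derivative_linear[OF D]] by simp
  then show ?thesis
    using has_derivative_compose[OF line D] by (simp add: o_def)
qed

lemma second_difference_mvt:
  fixes f :: "'a::real_normed_vector \<Rightarrow> real"
  assumes h: "0 \<le> h"
    and fd: "\<And>s. 0 \<le> s \<Longrightarrow> s \<le> h \<Longrightarrow>
      f differentiable (at (x + u + s *\<^sub>R v)) \<and> f differentiable (at (x + s *\<^sub>R v))"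
  obtains \<xi> where "0 \<le> \<xi>" "\<xi> \<le> h"
    "f (x + u + h *\<^sub>R v) - f (x + h *\<^sub>R v) - f (x + u) + f x
      = h * (frechet_derivative f (at (x + u + \<xi> *\<^sub>R v)) v - frechet_derivative f (at (x + \<xi> *\<^sub>R v)) v)"
proof -
  define \<phi> where "\<phi> s = f (x + u + s *\<^sub>R v) - f (x + s *\<^sub>R v)" for s
  have "(\<phi> has_derivative (\<lambda>t. t * (frechet_derivative f (at (x + u + s *\<^sub>R v)) v
      - frechet_derivative f (at (x + s *\<^sub>R v)) v))) (at s within {0..h})"
    if "0 \<le> s" "s \<le> h" for s
  proof -
    have "(\<phi> has_derivative (\<lambda>t. t * frechet_derivative f (at (x + u + s *\<^sub>R v)) v
        - t * frechet_derivative f (at (x + s *\<^sub>R v)) v)) (at s)"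
      unfolding \<phi>_def using fd[OF that] by (intro has_derivative_diff has_derivative_along_line) auto
    then show ?thesis by (simp add: right_diff_distrib has_derivative_at_withinI)
  qed
  from mvt_very_simple[OF h this] that show ?thesis
    by (auto simp: \<phi>_def)
qed

lemma second_difference_bound:
  fixes f :: "real^'n::finite \<Rightarrow> real"
  assumes h: "0 < h"
    and fd: "\<And>y. y \<in> cball x (2 * h) \<Longrightarrow> f differentiable (at y)"
    and D: "linear D"
    and approx: "\<And>y. y \<in> cball x (2 * h) \<Longrightarrow>
      \<bar>pd i f y - pd i f x - D (y - x)\<bar> \<le> e * norm (y - x)"
    and e: "0 \<le> e"
  shows "\<bar>f (x + h *\<^sub>R axis j 1 + h *\<^sub>R axis i 1) - f (x + h *\<^sub>R axis i 1) - f (x + h *\<^sub>R axis j 1) + f x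
      - h\<^sup>2 * D (axis j 1)\<bar> \<le> 3 * e * h\<^sup>2"
proof -
  let ?ei = "axis i 1 :: real^'n" and ?ej = "axis j 1 :: real^'n"
  let ?r = "\<lambda>y. pd i f y - pd i f x - D (y - x)"
  have near: "norm (h *\<^sub>R ?ej + s *\<^sub>R ?ei) \<le> 2 * h" "norm (s *\<^sub>R ?ei) \<le> h"
    if "0 \<le> s" "s \<le> h" for s
    using norm_triangle_ineq[of "h *\<^sub>R ?ej" "s *\<^sub>R ?ei"] that h by (simp_all add: norm_axis_1)
  have dist_shift: "dist x (x + w) = norm w" for w :: "real^'n"
    by (simp add: dist_norm)
  have inball: "x + h *\<^sub>R ?ej + s *\<^sub>R ?ei \<in> cball x (2 * h)" "x + s *\<^sub>R ?ei \<in> cball x (2 * h)"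
    if "0 \<le> s" "s \<le> h" for s
    using near[OF that] h unfolding mem_cball dist_shift add.assoc by auto
  have diff: "f differentiable (at (x + h *\<^sub>R ?ej + s *\<^sub>R ?ei)) \<and> f differentiable (at (x + s *\<^sub>R ?ei))"
    if "0 \<le> s" "s \<le> h" for s
    using fd inball[OF that] by blast
  obtain \<xi> where \<xi>: "0 \<le> \<xi>" "\<xi> \<le> h" and mvt:
    "f (x + h *\<^sub>R ?ej + h *\<^sub>R ?ei) - f (x + h *\<^sub>R ?ei) - f (x + h *\<^sub>R ?ej) + f x
      = h * (pd i f (x + h *\<^sub>R ?ej + \<xi> *\<^sub>R ?ei) - pd i f (x + \<xi> *\<^sub>R ?ei))"
    using second_difference_mvt[OF less_imp_le[OF h] diff] unfolding pd_def by blast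
  define y1 where "y1 = x + h *\<^sub>R ?ej + \<xi> *\<^sub>R ?ei"
  define y2 where "y2 = x + \<xi> *\<^sub>R ?ei"
  have r: "\<bar>?r y\<bar> \<le> e * b" if "y \<in> cball x (2 * h)" "norm (y - x) \<le> b" for y b
    using approx[OF that(1)] mult_left_mono[OF that(2) e] by linarith
  have r1: "\<bar>?r y1\<bar> \<le> e * (2 * h)"
    by (rule r) (use inball(1)[OF \<xi>] near(1)[OF \<xi>] in \<open>simp_all add: y1_def add.assoc\<close>)
  have r2: "\<bar>?r y2\<bar> \<le> e * h"
    by (rule r) (use inball(2)[OF \<xi>] near(2)[OF \<xi>] in \<open>simp_all add: y2_def\<close>)
  have "D (y1 - x) - D (y2 - x) = h * D ?ej"
    by (simp add: y1_def y2_def linear_add[OF D] linear_cmul[OF D])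
  then have "f (x + h *\<^sub>R ?ej + h *\<^sub>R ?ei) - f (x + h *\<^sub>R ?ei) - f (x + h *\<^sub>R ?ej) + f x
      - h\<^sup>2 * D ?ej = h * (?r y1 - ?r y2)"
    unfolding mvt y1_def[symmetric] y2_def[symmetric] by (simp add: power2_eq_square algebra_simps)
  also have "\<bar>\<dots>\<bar> \<le> h * (e * (2 * h) + e * h)"
    using r1 r2 h by (simp add: abs_mult mult_left_mono)
  finally show ?thesis
    by (simp add: power2_eq_square algebra_simps)
qed

lemma second_difference_approx:
  fixes f :: "real^'n::finite \<Rightarrow> real"
  assumes U: "open U" and x: "x \<in> U" and fd: "\<And>y. y \<in> U \<Longrightarrow> f differentiable (at y)"
    and pdi: "pd i f differentiable (at x)" and e: "0 < e"
  obtains \<delta> where "0 < \<delta>" "\<And>h. 0 < h \<Longrightarrow> h < \<delta> \<Longrightarrow>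
    \<bar>f (x + h *\<^sub>R axis j 1 + h *\<^sub>R axis i 1) - f (x + h *\<^sub>R axis i 1) - f (x + h *\<^sub>R axis j 1) + f x
      - h\<^sup>2 * pd j (pd i f) x\<bar> \<le> 3 * e * h\<^sup>2"
proof -
  define D where "D = frechet_derivative (pd i f) (at x)"
  have D: "(pd i f has_derivative D) (at x)"
    unfolding D_def using pdi frechet_derivative_works by blast
  obtain r where r: "0 < r" "ball x r \<subseteq> U"
    using U x open_contains_ball by blast
  obtain d where d: "0 < d" "\<And>y. norm (y - x) < d \<Longrightarrow>
      \<bar>pd i f y - pd i f x - D (y - x)\<bar> \<le> e * norm (y - x)"
    using D e unfolding has_derivative_at_alt real_norm_def by blast
  show ?thesis
  proof
    show "0 < min r d / 2"
      using r d by simp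
  next
    fix h :: real assume h: "0 < h" "h < min r d / 2"
    have near: "y \<in> U" "norm (y - x) < d" if "y \<in> cball x (2 * h)" for y
      using that h r(2) by (auto simp: dist_norm norm_minus_commute)
    show "\<bar>f (x + h *\<^sub>R axis j 1 + h *\<^sub>R axis i 1) - f (x + h *\<^sub>R axis i 1)
        - f (x + h *\<^sub>R axis j 1) + f x - h\<^sup>2 * pd j (pd i f) x\<bar> \<le> 3 * e * h\<^sup>2"
      unfolding pd_eq_derivative[OF D]
    proof (rule second_difference_bound[OF h(1) _ has_derivative_linear[OF D] _ less_imp_le[OF e]])
      fix y assume y: "y \<in> cball x (2 * h)"
      show "f differentiable (at y)"
        by (rule fd[OF near(1)[OF y]])
      show "\<bar>pd i f y - pd i f x - D (y - x)\<bar> \<le> e * norm (y - x)"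
        by (rule d(2)[OF near(2)[OF y]])
    qed
  qed
qed

(* Both mixed partials are limits of the same second difference quotient. *)
lemma pd_pd_commute:
  fixes f :: "real^'n::finite \<Rightarrow> real"
  assumes U: "open U" and x: "x \<in> U" and fd: "\<And>y. y \<in> U \<Longrightarrow> f differentiable (at y)"
    and pdi: "pd i f differentiable (at x)" and pdj: "pd j f differentiable (at x)"
  shows "pd j (pd i f) x = pd i (pd j f) x"
proof -
  let ?A = "pd j (pd i f) x" and ?B = "pd i (pd j f) x"
  have bound: "\<bar>?A - ?B\<bar> \<le> 6 * e" if e: "0 < e" for e
  proof -
    obtain d1 where d1: "0 < d1" "\<And>h. 0 < h \<Longrightarrow> h < d1 \<Longrightarrow>
        \<bar>f (x + h *\<^sub>R axis j 1 + h *\<^sub>R axis i 1) - f (x + h *\<^sub>R axis i 1)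
          - f (x + h *\<^sub>R axis j 1) + f x - h\<^sup>2 * ?A\<bar> \<le> 3 * e * h\<^sup>2"
      using second_difference_approx[OF U x fd pdi e] by blast
    obtain d2 where d2: "0 < d2" "\<And>h. 0 < h \<Longrightarrow> h < d2 \<Longrightarrow>
        \<bar>f (x + h *\<^sub>R axis i 1 + h *\<^sub>R axis j 1) - f (x + h *\<^sub>R axis j 1)
          - f (x + h *\<^sub>R axis i 1) + f x - h\<^sup>2 * ?B\<bar> \<le> 3 * e * h\<^sup>2"
      using second_difference_approx[OF U x fd pdj e] by blast
    define h where "h = min d1 d2 / 2"
    have h: "0 < h" "h < d1" "h < d2"
      using d1 d2 by (auto simp: h_def)
    have swap: "x + h *\<^sub>R axis i 1 + h *\<^sub>R axis j 1 = x + h *\<^sub>R axis j 1 + h *\<^sub>R axis i 1"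
      by (simp add: algebra_simps)
    have "\<bar>h\<^sup>2 * ?A - h\<^sup>2 * ?B\<bar> \<le> h\<^sup>2 * (6 * e)"
      using d1(2)[OF h(1,2)] d2(2)[OF h(1,3)] unfolding swap abs_le_iff
      by (auto simp: algebra_simps)
    then show ?thesis
      using h by (simp add: abs_mult flip: right_diff_distrib)
  qed
  show ?thesis
  proof (rule ccontr)
    assume "?A \<noteq> ?B"
    then have "\<bar>?A - ?B\<bar> \<le> 6 * (\<bar>?A - ?B\<bar> / 12)"
      by (intro bound) simp
    with \<open>?A \<noteq> ?B\<close> show False
      by simp
  qed
qed

section \<open>Schouten brackets and Lie derivatives on 1-jets\<close>

(* A bivector field enters the Schouten bracket and the Lie derivative at x only through its
  1-jet there: the values p i j = P x $ i $ j and the derivatives dp l i j = pd l (P _ $ i $ j) x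
  (likewise z i and dz l i for a vector field). The algebra is done for arbitrary such arrays. *)
definition jet_schouten :: "('n::finite \<Rightarrow> 'n \<Rightarrow> real) \<Rightarrow> ('n \<Rightarrow> 'n \<Rightarrow> 'n \<Rightarrow> real)
    \<Rightarrow> ('n \<Rightarrow> 'n \<Rightarrow> real) \<Rightarrow> ('n \<Rightarrow> 'n \<Rightarrow> 'n \<Rightarrow> real) \<Rightarrow> 'n \<Rightarrow> 'n \<Rightarrow> 'n \<Rightarrow> real" where
  "jet_schouten a da b db i j k = (\<Sum>l\<in>UNIV.
      a l i * db l j k + b l i * da l j k + a l j * db l k i + b l j * da l k i
    + a l k * db l i j + b l k * da l i j)"

definition jet_lie :: "('n::finite \<Rightarrow> real) \<Rightarrow> ('n \<Rightarrow> 'n \<Rightarrow> real)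
    \<Rightarrow> ('n \<Rightarrow> 'n \<Rightarrow> real) \<Rightarrow> ('n \<Rightarrow> 'n \<Rightarrow> 'n \<Rightarrow> real) \<Rightarrow> 'n \<Rightarrow> 'n \<Rightarrow> real" where
  "jet_lie z dz p dp i j = (\<Sum>l\<in>UNIV. z l * dp l i j - p l j * dz l i - p i l * dz l j)"

definition jet_wedge3 :: "('n \<Rightarrow> real) \<Rightarrow> ('n \<Rightarrow> 'n \<Rightarrow> real) \<Rightarrow> 'n \<Rightarrow> 'n \<Rightarrow> 'n \<Rightarrow> real" where
  "jet_wedge3 z b i j k = z i * b j k + z j * b k i + z k * b i j"

lemma jet_schouten_diff_left:
  "jet_schouten (\<lambda>i j. a i j - a' i j) (\<lambda>l i j. da l i j - da' l i j) b db i j k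
    = jet_schouten a da b db i j k - jet_schouten a' da' b db i j k"
  unfolding jet_schouten_def sum_subtractf[symmetric]
  by (rule sum.cong) (simp_all add: algebra_simps)

lemma jet_schouten_sum_left:
  "jet_schouten (\<lambda>i j. \<Sum>c\<in>C. w c i j) (\<lambda>l i j. \<Sum>c\<in>C. dw c l i j) b db i j k
    = (\<Sum>c\<in>C. jet_schouten (w c) (dw c) b db i j k)"
proof -
  have "jet_schouten (\<lambda>i j. \<Sum>c\<in>C. w c i j) (\<lambda>l i j. \<Sum>c\<in>C. dw c l i j) b db i j k
      = (\<Sum>l\<in>UNIV. \<Sum>c\<in>C. w c l i * db l j k + b l i * dw c l j k + w c l j * db l k i
          + b l j * dw c l k i + w c l k * db l i j + b l k * dw c l i j)"
    unfolding jet_schouten_def by (simp add: sum_distrib_left sum_distrib_right sum.distrib)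
  also have "\<dots> = (\<Sum>c\<in>C. jet_schouten (w c) (dw c) b db i j k)"
    unfolding jet_schouten_def by (rule sum.swap)
  finally show ?thesis .
qed

lemma jet_schouten_pencil:
  "jet_schouten (\<lambda>i j. a i j - c * b i j) (\<lambda>l i j. da l i j - c * db l i j)
      (\<lambda>i j. a i j - c * b i j) (\<lambda>l i j. da l i j - c * db l i j) i j k
    = jet_schouten a da a da i j k - 2 * c * jet_schouten a da b db i j k
      + c\<^sup>2 * jet_schouten b db b db i j k"
  unfolding jet_schouten_def sum_distrib_left sum_subtractf[symmetric] sum.distrib[symmetric]
  by (rule sum.cong) (simp_all add: algebra_simps power2_eq_square)

lemma jet_schouten_wedge:
  assumes p_antisym: "\<And>i j. p i j = - p j i"
  shows "jet_schouten (\<lambda>i j. x i * z j - x j * z i)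
      (\<lambda>l i j. dx l i * z j + x i * dz l j - dx l j * z i - x j * dz l i) p dp i j k
    = jet_wedge3 z (jet_lie x dx p dp) i j k - jet_wedge3 x (jet_lie z dz p dp) i j k"
  unfolding jet_schouten_def jet_wedge3_def jet_lie_def
    sum_distrib_left sum_subtractf[symmetric] sum.distrib[symmetric]
  by (rule sum.cong[OF refl])
    (simp add: algebra_simps p_antisym[of i] p_antisym[of j] p_antisym[of k])

lemma jet_casimir_hessian:
  fixes p hh :: "'n::finite \<Rightarrow> 'n \<Rightarrow> real" and h v :: "'n \<Rightarrow> real"
  assumes p_antisym: "\<And>i j. p i j = - p j i"
    and hess_sym: "\<And>l m. hh l m = hh m l"
    and casimir_deriv: "\<And>l i. (\<Sum>m\<in>UNIV. dp l i m * h m + p i m * hh l m) = 0"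
  shows "(\<Sum>l\<in>UNIV. \<Sum>m\<in>UNIV. p l k * (v m * hh l m)) = (\<Sum>l\<in>UNIV. \<Sum>m\<in>UNIV. v l * dp l k m * h m)"
proof -
  have contract: "(\<Sum>l\<in>UNIV. p l k * hh l m) = (\<Sum>l\<in>UNIV. dp m k l * h l)" for m
  proof -
    have "(\<Sum>l\<in>UNIV. p l k * hh l m) = (\<Sum>l\<in>UNIV. - (p k l * hh m l))"
    proof (intro sum.cong refl)
      fix l
      show "p l k * hh l m = - (p k l * hh m l)"
        unfolding p_antisym[of l k] hess_sym[of l m] by simp
    qed
    also have "\<dots> = (\<Sum>l\<in>UNIV. dp m k l * h l)"
      using casimir_deriv[of m k] unfolding sum.distrib sum_negf by linarith
    finally show ?thesis .
  qed
  have "(\<Sum>l\<in>UNIV. \<Sum>m\<in>UNIV. p l k * (v m * hh l m)) = (\<Sum>m\<in>UNIV. v m * (\<Sum>l\<in>UNIV. p l k * hh l m))"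
    by (subst sum.swap) (simp add: sum_distrib_left algebra_simps)
  also have "\<dots> = (\<Sum>m\<in>UNIV. v m * (\<Sum>l\<in>UNIV. dp m k l * h l))"
    by (simp only: contract)
  also have "\<dots> = (\<Sum>l\<in>UNIV. \<Sum>m\<in>UNIV. v l * dp l k m * h m)"
    by (simp add: sum_distrib_left algebra_simps)
  finally show ?thesis .
qed

lemma jet_lie_hamiltonian_eq_0:
  assumes p_antisym: "\<And>i j. p i j = - p j i" and q_antisym: "\<And>i j. q i j = - q j i"
    and dp_antisym: "\<And>l i j. dp l i j = - dp l j i" and dq_antisym: "\<And>l i j. dq l i j = - dq l j i"
    and hess_sym: "\<And>l m. hh l m = hh m l"
    and casimir: "\<And>i. (\<Sum>m\<in>UNIV. p i m * h m) = 0"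
    and casimir_deriv: "\<And>l i. (\<Sum>m\<in>UNIV. dp l i m * h m + p i m * hh l m) = 0"
    and compatible: "\<And>i j k. jet_schouten q dq p dp i j k = 0"
  shows "jet_lie (\<lambda>i. \<Sum>m\<in>UNIV. q i m * h m) (\<lambda>l i. \<Sum>m\<in>UNIV. dq l i m * h m + q i m * hh l m)
      p dp j k = 0"
proof -
  (* Differentiating P dH = 0 trades the second derivatives of H for first derivatives of P
    (hessian_term_k, hessian_term_j); what is left is the contraction of [P',P] with dH. *)
  note hessian = jet_casimir_hessian[OF p_antisym hess_sym casimir_deriv]
  have hessian_term_k: "(\<Sum>l\<in>UNIV. \<Sum>m\<in>UNIV. p l k * (q j m * hh l m))
      = (\<Sum>l\<in>UNIV. \<Sum>m\<in>UNIV. q j l * dp l k m * h m)"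
    by (rule hessian)
  have "(\<Sum>l\<in>UNIV. \<Sum>m\<in>UNIV. p j l * (q k m * hh l m))
      = - (\<Sum>l\<in>UNIV. \<Sum>m\<in>UNIV. p l j * (q k m * hh l m))"
    unfolding p_antisym[of j] by (simp add: sum_negf)
  then have hessian_term_j: "(\<Sum>l\<in>UNIV. \<Sum>m\<in>UNIV. p j l * (q k m * hh l m))
      = - (\<Sum>l\<in>UNIV. \<Sum>m\<in>UNIV. q k l * dp l j m * h m)"
    by (simp only: hessian)
  have lie_expanded: "jet_lie (\<lambda>i. \<Sum>m\<in>UNIV. q i m * h m) (\<lambda>l i. \<Sum>m\<in>UNIV. dq l i m * h m + q i m * hh l m) p dp j k
     = (\<Sum>l\<in>UNIV. \<Sum>m\<in>UNIV. q l m * h m * dp l j k - p l k * dq l j m * h m - p j l * dq l k m * h m)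
       - (\<Sum>l\<in>UNIV. \<Sum>m\<in>UNIV. p l k * (q j m * hh l m))
       - (\<Sum>l\<in>UNIV. \<Sum>m\<in>UNIV. p j l * (q k m * hh l m))"
    unfolding jet_lie_def
    by (simp add: sum_distrib_left sum_distrib_right sum_subtractf[symmetric] sum.distrib[symmetric] algebra_simps)
  have schouten_contracted: "(\<Sum>l\<in>UNIV. \<Sum>m\<in>UNIV. q l m * h m * dp l j k - p l k * dq l j m * h m - p j l * dq l k m * h m)
       - (\<Sum>l\<in>UNIV. \<Sum>m\<in>UNIV. q j l * dp l k m * h m) + (\<Sum>l\<in>UNIV. \<Sum>m\<in>UNIV. q k l * dp l j m * h m)
     = (\<Sum>m\<in>UNIV. h m * jet_schouten q dq p dp j k m) - (\<Sum>l\<in>UNIV. (\<Sum>m\<in>UNIV. p l m * h m) * dq l j k)"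
  proof -
    have "(\<Sum>m\<in>UNIV. h m * jet_schouten q dq p dp j k m) = (\<Sum>l\<in>UNIV. \<Sum>m\<in>UNIV. h m * (q l j * dp l k m
        + p l j * dq l k m + q l k * dp l m j + p l k * dq l m j + q l m * dp l j k + p l m * dq l j k))"
      unfolding jet_schouten_def by (subst sum.swap) (simp add: sum_distrib_left)
    then show ?thesis
      by (simp only: sum_distrib_right sum_subtractf[symmetric] sum.distrib[symmetric])
        (intro sum.cong refl; simp add: algebra_simps q_antisym[of j] q_antisym[of k]
          p_antisym[of j] dp_antisym[of _ j] dq_antisym[of _ j])
  qed
  show ?thesis
    using lie_expanded schouten_contracted hessian_term_k hessian_term_j by (simp add: compatible casimir)
qed

section \<open>Bivector fields\<close>

lemma schouten_eq_jet_schouten: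
  "schouten A B x i j k = jet_schouten (\<lambda>i j. A x $ i $ j) (\<lambda>l i j. pd l (\<lambda>y. A y $ i $ j) x)
      (\<lambda>i j. B x $ i $ j) (\<lambda>l i j. pd l (\<lambda>y. B y $ i $ j) x) i j k"
  unfolding schouten_def jet_schouten_def Let_def by (simp add: sum.distrib add.assoc)

lemma lie_bv_eq_jet_lie:
  "lie_bv Z P x $ i $ j = jet_lie (\<lambda>i. Z x $ i) (\<lambda>l i. pd l (\<lambda>y. Z y $ i) x)
      (\<lambda>i j. P x $ i $ j) (\<lambda>l i j. pd l (\<lambda>y. P y $ i $ j) x) i j"
  by (simp add: lie_bv_def jet_lie_def)

lemma wedge3_eq_jet_wedge3: "wedge3 X B x i j k = jet_wedge3 (\<lambda>i. X x $ i) (\<lambda>i j. B x $ i $ j) i j k"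
  by (simp add: wedge3_def jet_wedge3_def)

lemma sharp_component: "sharp P H x $ i = (\<Sum>m\<in>UNIV. P x $ i $ m * pd m H x)"
  by (simp add: sharp_def grad_def matrix_vector_mult_def)

lemma bivector_on_antisym: "bivector_on U P \<Longrightarrow> x \<in> U \<Longrightarrow> P x $ i $ j = - P x $ j $ i"
  unfolding bivector_on_def by blast

lemma bivector_on_cinf: "bivector_on U P \<Longrightarrow> cinf_on U (\<lambda>y. P y $ i $ j)"
  unfolding bivector_on_def by blast

lemma bivector_on_differentiable:
  "bivector_on U P \<Longrightarrow> x \<in> U \<Longrightarrow> (\<lambda>y. P y $ i $ j) differentiable (at x)"
  unfolding bivector_on_def using cinf_on_differentiable by blast

lemma bivector_on_pd_antisym:
  assumes U: "open U" and P: "bivector_on U P" and x: "x \<in> U"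
  shows "pd l (\<lambda>y. P y $ i $ j) x = - pd l (\<lambda>y. P y $ j $ i) x"
proof -
  have "pd l (\<lambda>y. P y $ i $ j) x = pd l (\<lambda>y. - P y $ j $ i) x"
  proof (rule pd_cong_open[OF U x])
    show "P y $ i $ j = - P y $ j $ i" if "y \<in> U" for y
      by (rule bivector_on_antisym[OF P that])
    show "(\<lambda>y. - P y $ j $ i) differentiable (at x)"
      by (rule differentiable_minus[OF bivector_on_differentiable[OF P x]])
  qed
  then show ?thesis
    using pd_uminus[OF bivector_on_differentiable[OF P x]] by simp
qed

lemma schouten_pencil:
  assumes "\<And>i j. (\<lambda>y. A y $ i $ j) differentiable (at x)"
    and "\<And>i j. (\<lambda>y. B y $ i $ j) differentiable (at x)"
  shows "schouten (\<lambda>y. A y - c *\<^sub>R B y) (\<lambda>y. A y - c *\<^sub>R B y) x i j k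
    = schouten A A x i j k - 2 * c * schouten A B x i j k + c\<^sup>2 * schouten B B x i j k"
proof -
  have vals: "(\<lambda>i j. (A x - c *\<^sub>R B x) $ i $ j) = (\<lambda>i j. A x $ i $ j - c * B x $ i $ j)"
    by simp
  have derivs: "(\<lambda>l i j. pd l (\<lambda>y. (A y - c *\<^sub>R B y) $ i $ j) x)
      = (\<lambda>l i j. pd l (\<lambda>y. A y $ i $ j) x - c * pd l (\<lambda>y. B y $ i $ j) x)"
    using assms by (simp add: pd_diff pd_cmult)
  show ?thesis
    unfolding schouten_eq_jet_schouten vals derivs jet_schouten_pencil ..
qed

lemma schouten_diff_sum_left:
  fixes W :: "'k::finite \<Rightarrow> real^'n::finite \<Rightarrow> real^'n^'n"
  assumes A: "\<And>i j. (\<lambda>y. A y $ i $ j) differentiable (at x)"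
    and W: "\<And>a i j. (\<lambda>y. W a y $ i $ j) differentiable (at x)"
  shows "schouten (\<lambda>y. A y - (\<Sum>a\<in>UNIV. W a y)) B x i j k
    = schouten A B x i j k - (\<Sum>a\<in>UNIV. schouten (W a) B x i j k)"
proof -
  have vals: "(\<lambda>i j. (A x - (\<Sum>a\<in>UNIV. W a x)) $ i $ j) = (\<lambda>i j. A x $ i $ j - (\<Sum>a\<in>UNIV. W a x $ i $ j))"
    by simp
  have derivs: "(\<lambda>l i j. pd l (\<lambda>y. (A y - (\<Sum>a\<in>UNIV. W a y)) $ i $ j) x)
      = (\<lambda>l i j. pd l (\<lambda>y. A y $ i $ j) x - (\<Sum>a\<in>UNIV. pd l (\<lambda>y. W a y $ i $ j) x))"
    using A W by (simp add: pd_diff pd_sum)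
  show ?thesis
    unfolding schouten_eq_jet_schouten vals derivs jet_schouten_diff_left jet_schouten_sum_left ..
qed

lemma schouten_wedge2:
  assumes X: "\<And>i. (\<lambda>y. X y $ i) differentiable (at x)" and Z: "\<And>i. (\<lambda>y. Z y $ i) differentiable (at x)"
    and P_antisym: "\<And>i j. P x $ i $ j = - P x $ j $ i"
  shows "schouten (wedge2 X Z) P x i j k
    = wedge3 Z (lie_bv X P) x i j k - wedge3 X (lie_bv Z P) x i j k"
proof -
  have vals: "(\<lambda>i j. wedge2 X Z x $ i $ j) = (\<lambda>i j. X x $ i * Z x $ j - X x $ j * Z x $ i)"
    by (simp add: wedge2_def)
  have derivs: "(\<lambda>l i j. pd l (\<lambda>y. wedge2 X Z y $ i $ j) x)
      = (\<lambda>l i j. pd l (\<lambda>y. X y $ i) x * Z x $ j + X x $ i * pd l (\<lambda>y. Z y $ j) x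
          - pd l (\<lambda>y. X y $ j) x * Z x $ i - X x $ j * pd l (\<lambda>y. Z y $ i) x)"
  proof (intro ext)
    fix l i j
    have "(\<lambda>y. wedge2 X Z y $ i $ j) = (\<lambda>y. X y $ i * Z y $ j - X y $ j * Z y $ i)"
      by (simp add: wedge2_def)
    then show "pd l (\<lambda>y. wedge2 X Z y $ i $ j) x = pd l (\<lambda>y. X y $ i) x * Z x $ j
        + X x $ i * pd l (\<lambda>y. Z y $ j) x - pd l (\<lambda>y. X y $ j) x * Z x $ i - X x $ j * pd l (\<lambda>y. Z y $ i) x"
      using differentiable_mult[OF X Z]
      by (simp only: pd_diff pd_mult[OF X Z] diff_diff_eq2 diff_add_eq_diff_diff_swap)
  qed
  show ?thesis
    unfolding schouten_eq_jet_schouten vals derivs jet_schouten_wedge[OF P_antisym]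
      wedge3_eq_jet_wedge3 lie_bv_eq_jet_lie ..
qed

lemma sharp_differentiable:
  assumes "\<And>i j. (\<lambda>y. P y $ i $ j) differentiable (at x)" "\<And>m. pd m H differentiable (at x)"
  shows "(\<lambda>y. sharp P H y $ i) differentiable (at x)"
  unfolding sharp_component using assms by simp

lemma pd_sharp:
  assumes "\<And>i j. (\<lambda>y. P y $ i $ j) differentiable (at x)" "\<And>m. pd m H differentiable (at x)"
  shows "pd l (\<lambda>y. sharp P H y $ i) x
    = (\<Sum>m\<in>UNIV. pd l (\<lambda>y. P y $ i $ m) x * pd m H x + P x $ i $ m * pd l (pd m H) x)"
  unfolding sharp_component using assms by (simp add: pd_sum pd_mult)

section \<open>Poisson pencils\<close>

lemma poly_pencil_leading_coeff_eq_0: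
  fixes A B :: "nat \<Rightarrow> real"
  assumes "\<And>lam. (\<Sum>t\<le>n. (A t - lam * B t) * lam ^ (n - t)) = 0"
  shows "B 0 = 0"
proof -
  define pA where "pA = (\<Sum>t\<le>n. monom (A t) (n - t))"
  define pB where "pB = (\<Sum>t\<le>n. monom (B t) (n - t))"
  have "poly pA lam = poly (pCons 0 pB) lam" for lam
    using assms[of lam]
    by (simp add: pA_def pB_def poly_sum poly_monom left_diff_distrib sum_subtractf sum_distrib_left mult.assoc)
  then have "pA = pCons 0 pB"
    using poly_eq_poly_eq_iff by blast
  then have "coeff pB n = coeff pA (Suc n)"
    by simp
  also have "\<dots> = 0"
    by (auto simp: pA_def coeff_sum intro!: sum.neutral)
  finally have "(\<Sum>t\<le>n. if n - t = n then B t else 0) = 0"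
    by (simp add: pB_def coeff_sum)
  also have "(\<Sum>t\<le>n. if n - t = n then B t else 0) = (\<Sum>t\<le>n. if t = 0 then B t else 0)"
    by (intro sum.cong) auto
  finally show ?thesis
    by simp
qed

lemma casimir_poly_leading_coeff_casimir:
  assumes casimir: "\<And>lam. sharp (\<lambda>y. P' y - lam *\<^sub>R P y) (casimir_poly H m a lam) x = 0"
    and dH: "\<And>t. t \<le> m a \<Longrightarrow> H a t differentiable (at x)"
  shows "sharp P (H a 0) x = 0"
proof -
  have "(\<Sum>s\<in>UNIV. P x $ i $ s * pd s (H a 0) x) = 0" for i
  proof (rule poly_pencil_leading_coeff_eq_0
      [where A = "\<lambda>t. \<Sum>s\<in>UNIV. P' x $ i $ s * pd s (H a t) x"
         and B = "\<lambda>t. \<Sum>s\<in>UNIV. P x $ i $ s * pd s (H a t) x" and n = "m a"])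
    fix lam
    have "pd s (casimir_poly H m a lam) x = (\<Sum>t\<le>m a. pd s (H a t) x * lam ^ (m a - t))" for s
    proof -
      have "pd s (casimir_poly H m a lam) x = (\<Sum>t\<le>m a. pd s (\<lambda>y. H a t y * lam ^ (m a - t)) x)"
        unfolding casimir_poly_def using dH by (subst pd_sum) auto
      then show ?thesis
        using dH by (simp add: pd_mult_const)
    qed
    then have "0 = (\<Sum>s\<in>UNIV. (P' x $ i $ s - lam * P x $ i $ s)
        * (\<Sum>t\<le>m a. pd s (H a t) x * lam ^ (m a - t)))"
      using casimir[of lam] by (simp add: vec_eq_iff sharp_component)
    also have "\<dots> = (\<Sum>t\<le>m a. ((\<Sum>s\<in>UNIV. P' x $ i $ s * pd s (H a t) x)
        - lam * (\<Sum>s\<in>UNIV. P x $ i $ s * pd s (H a t) x)) * lam ^ (m a - t))"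
      by (simp add: sum_distrib_left sum_distrib_right sum_subtractf algebra_simps sum.swap[of _ UNIV])
    finally show "(\<Sum>t\<le>m a. ((\<Sum>s\<in>UNIV. P' x $ i $ s * pd s (H a t) x)
        - lam * (\<Sum>s\<in>UNIV. P x $ i $ s * pd s (H a t) x)) * lam ^ (m a - t)) = 0"
      by simp
  qed
  then show ?thesis
    by (simp add: vec_eq_iff sharp_component)
qed

lemma lie_bv_hamiltonian_eq_0:
  assumes U: "open U" and x: "x \<in> U"
    and P: "bivector_on U P" and P': "bivector_on U P'"
    and compatible: "\<And>i j k. schouten P' P x i j k = 0"
    and H: "cinf_on U H" and casimir: "\<And>y. y \<in> U \<Longrightarrow> sharp P H y = 0"
  shows "lie_bv (sharp P' H) P x = 0"
proof -
  define p where "p = (\<lambda>i j. P x $ i $ j)"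
  define dp where "dp = (\<lambda>l i j. pd l (\<lambda>y. P y $ i $ j) x)"
  define q where "q = (\<lambda>i j. P' x $ i $ j)"
  define dq where "dq = (\<lambda>l i j. pd l (\<lambda>y. P' y $ i $ j) x)"
  define h where "h = (\<lambda>m. pd m H x)"
  define hh where "hh = (\<lambda>l m. pd l (pd m H) x)"
  have dP: "\<And>i j. (\<lambda>y. P y $ i $ j) differentiable (at x)"
    and dP': "\<And>i j. (\<lambda>y. P' y $ i $ j) differentiable (at x)"
    using bivector_on_differentiable[OF _ x] P P' by blast+
  have dH: "\<And>m. pd m H differentiable (at x)"
    using cinf_on_pd_differentiable[OF H x] .
  have casimir_deriv: "(\<Sum>m\<in>UNIV. dp l i m * h m + p i m * hh l m) = 0" for l i
  proof -
    have "pd l (\<lambda>y. sharp P H y $ i) x = pd l (\<lambda>y. 0) x"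
      using casimir by (intro pd_cong_open[OF U x]) simp_all
    then show ?thesis
      unfolding pd_sharp[OF dP dH] pd_const p_def dp_def h_def hh_def .
  qed
  have hess_sym: "hh l m = hh m l" for l m
    unfolding hh_def using pd_pd_commute[OF U x _ dH dH] cinf_on_differentiable[OF H] by blast
  have "jet_lie (\<lambda>i. \<Sum>m\<in>UNIV. q i m * h m) (\<lambda>l i. \<Sum>m\<in>UNIV. dq l i m * h m + q i m * hh l m) p dp i j = 0"
    for i j
  proof (rule jet_lie_hamiltonian_eq_0[OF _ _ _ _ hess_sym _ casimir_deriv])
    show "p i j = - p j i" "q i j = - q j i" for i j
      unfolding p_def q_def using bivector_on_antisym[OF _ x] P P' by blast+
    show "dp l i j = - dp l j i" "dq l i j = - dq l j i" for l i j
      unfolding dp_def dq_def using bivector_on_pd_antisym[OF U _ x] P P' by blast+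
    show "(\<Sum>m\<in>UNIV. p i m * h m) = 0" for i
      using casimir[OF x] unfolding p_def h_def by (metis sharp_component zero_index)
    show "jet_schouten q dq p dp i j k = 0" for i j k
      using compatible unfolding schouten_eq_jet_schouten p_def dp_def q_def dq_def .
  qed
  then show ?thesis
    unfolding vec_eq_iff lie_bv_eq_jet_lie pd_sharp[OF dP' dH] unfolding sharp_component
    by (simp add: p_def dp_def q_def dq_def h_def hh_def)
qed

lemma poisson_pencil_iff_schouten_eq_0:
  assumes U: "open U" and A: "poisson_on U A" and B: "poisson_on U B"
  shows "(\<forall>lam. poisson_on U (\<lambda>x. A x - lam *\<^sub>R B x))
    \<longleftrightarrow> (\<forall>x\<in>U. \<forall>i j k. schouten A B x i j k = 0)"
proof -
  have A': "bivector_on U A" and B': "bivector_on U B"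
    and AA: "\<And>x i j k. x \<in> U \<Longrightarrow> schouten A A x i j k = 0"
    and BB: "\<And>x i j k. x \<in> U \<Longrightarrow> schouten B B x i j k = 0"
    using A B unfolding poisson_on_def by blast+
  have pencil: "schouten (\<lambda>y. A y - lam *\<^sub>R B y) (\<lambda>y. A y - lam *\<^sub>R B y) x i j k
      = - 2 * lam * schouten A B x i j k" if x: "x \<in> U" for x lam i j k
    using schouten_pencil[OF bivector_on_differentiable[OF A' x] bivector_on_differentiable[OF B' x]]
    by (simp add: AA[OF x] BB[OF x])
  have bivector: "bivector_on U (\<lambda>x. A x - lam *\<^sub>R B x)" for lam
    unfolding bivector_on_def
  proof (intro conjI allI ballI)
    show "cinf_on U (\<lambda>x. (A x - lam *\<^sub>R B x) $ i $ j)" for i j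
      using cinf_on_diff_cmult[OF U bivector_on_cinf[OF A'] bivector_on_cinf[OF B']] by simp
    show "(A x - lam *\<^sub>R B x) $ i $ j = - (A x - lam *\<^sub>R B x) $ j $ i" if "x \<in> U" for x i j
      using bivector_on_antisym[OF A' that, of i j] bivector_on_antisym[OF B' that, of i j] by simp
  qed
  show ?thesis
  proof
    assume "\<forall>lam. poisson_on U (\<lambda>x. A x - lam *\<^sub>R B x)"
    then have "schouten (\<lambda>y. A y - 1 *\<^sub>R B y) (\<lambda>y. A y - 1 *\<^sub>R B y) x i j k = 0"
      if "x \<in> U" for x i j k
      using that unfolding poisson_on_def by blast
    then show "\<forall>x\<in>U. \<forall>i j k. schouten A B x i j k = 0"
      using pencil[where lam = 1] by simp
  next
    assume "\<forall>x\<in>U. \<forall>i j k. schouten A B x i j k = 0"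
    then show "\<forall>lam. poisson_on U (\<lambda>x. A x - lam *\<^sub>R B x)"
      using bivector pencil unfolding poisson_on_def by simp
  qed
qed

lemma schouten_hamiltonian_wedge_correction:
  fixes H :: "'k::finite \<Rightarrow> real^'n::finite \<Rightarrow> real" and Z :: "'k \<Rightarrow> real^'n \<Rightarrow> real^'n"
  assumes U: "open U" and x: "x \<in> U"
    and P: "bivector_on U P" and P': "bivector_on U P'"
    and compatible: "\<And>i j k. schouten P' P x i j k = 0"
    and H: "\<And>a. cinf_on U (H a)" and casimir: "\<And>a y. y \<in> U \<Longrightarrow> sharp P (H a) y = 0"
    and Z: "\<And>a i. (\<lambda>y. Z a y $ i) differentiable (at x)"
  shows "schouten (\<lambda>y. P' y - (\<Sum>a\<in>UNIV. wedge2 (sharp P' (H a)) (Z a) y)) P x i j k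
    = (\<Sum>a\<in>UNIV. wedge3 (sharp P' (H a)) (lie_bv (Z a) P) x i j k)"
proof -
  have X: "(\<lambda>y. sharp P' (H a) y $ i) differentiable (at x)" for a i
    by (rule sharp_differentiable[OF bivector_on_differentiable[OF P' x] cinf_on_pd_differentiable[OF H x]])
  have "wedge3 (Z a) (lie_bv (sharp P' (H a)) P) x i j k = 0" for a
    using lie_bv_hamiltonian_eq_0[OF U x P P' compatible H casimir] by (simp add: wedge3_def)
  then have wedge: "schouten (wedge2 (sharp P' (H a)) (Z a)) P x i j k
      = - wedge3 (sharp P' (H a)) (lie_bv (Z a) P) x i j k" for a
    using schouten_wedge2[where P = P, OF X Z bivector_on_antisym[OF P x]] by simp
  have "schouten (\<lambda>y. P' y - (\<Sum>a\<in>UNIV. wedge2 (sharp P' (H a)) (Z a) y)) P x i j k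
      = schouten P' P x i j k - (\<Sum>a\<in>UNIV. schouten (wedge2 (sharp P' (H a)) (Z a)) P x i j k)"
  proof (rule schouten_diff_sum_left)
    show "(\<lambda>y. P' y $ i $ j) differentiable (at x)" for i j
      by (rule bivector_on_differentiable[OF P' x])
    show "(\<lambda>y. wedge2 (sharp P' (H a)) (Z a) y $ i $ j) differentiable (at x)" for a i j
      using X Z by (simp add: wedge2_def)
  qed
  then show ?thesis
    using compatible by (simp add: wedge sum_negf)
qed

theorem theorem1:
  fixes U :: "(real^'n::finite) set"
    and P P' Q :: "real^'n \<Rightarrow> real^'n^'n"
    and H :: "'k::finite \<Rightarrow> nat \<Rightarrow> real^'n \<Rightarrow> real"
    and m :: "'k \<Rightarrow> nat"
    and Z Xp :: "'k \<Rightarrow> real^'n \<Rightarrow> real^'n"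
  assumes U_open: "open U"
    and dim: "CARD('n) = 2 * (\<Sum>a\<in>UNIV. m a) + CARD('k)"
    and pencil: "\<And>lam. poisson_on U (\<lambda>x. P' x - lam *\<^sub>R P x)"
    and P_poisson: "poisson_on U P"
    and P'_poisson: "poisson_on U P'"
    and H_smooth: "\<And>a i. i \<le> m a \<Longrightarrow> cinf_on U (H a i)"
    and casimir: "\<And>a lam x. x \<in> U \<Longrightarrow>
        sharp (\<lambda>y. P' y - lam *\<^sub>R P y) (casimir_poly H m a lam) x = 0"
    and indep: "\<And>x c. x \<in> U \<Longrightarrow>
        (\<Sum>a\<in>UNIV. \<Sum>i\<le>m a. c a i *\<^sub>R grad (H a i) x) = 0 \<Longrightarrow>
        (\<forall>a. \<forall>i\<le>m a. c a i = 0)"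
    and Z_smooth: "\<And>a. vfield_on U (Z a)"
    and Z_compl_span: "\<And>x v. x \<in> U \<Longrightarrow>
        \<exists>c \<alpha>. v = (\<Sum>a\<in>UNIV. c a *\<^sub>R Z a x) + P x *v \<alpha>"
    and Z_compl_indep: "\<And>x c \<alpha>. x \<in> U \<Longrightarrow>
        (\<Sum>a\<in>UNIV. c a *\<^sub>R Z a x) + P x *v \<alpha> = 0 \<Longrightarrow> (\<forall>a. c a = 0) \<and> P x *v \<alpha> = 0"
    and Z_norm: "\<And>a b x. x \<in> U \<Longrightarrow>
        Z a x \<bullet> grad (H b 0) x = (if a = b then 1 else 0)"
    and Xp_def: "\<And>a. Xp a = sharp P' (H a 0)"
    and Q_def: "Q = (\<lambda>x. P' x - (\<Sum>a\<in>UNIV. wedge2 (Xp a) (Z a) x))"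
    and Q_poisson: "poisson_on U Q"
  shows "(\<forall>x\<in>U. \<forall>i j k. schouten Q P x i j k
              = (\<Sum>a\<in>UNIV. wedge3 (Xp a) (lie_bv (Z a) P) x i j k))
       \<and> ((\<forall>lam. poisson_on U (\<lambda>x. Q x - lam *\<^sub>R P x))
            \<longleftrightarrow> (\<forall>x\<in>U. \<forall>i j k. (\<Sum>a\<in>UNIV. wedge3 (Xp a) (lie_bv (Z a) P) x i j k) = 0))"
proof -
  have P: "bivector_on U P" and P': "bivector_on U P'"
    using P_poisson P'_poisson unfolding poisson_on_def by blast+
  have compatible: "\<forall>x\<in>U. \<forall>i j k. schouten P' P x i j k = 0"
    using poisson_pencil_iff_schouten_eq_0[OF U_open P'_poisson P_poisson] pencil by blast
  have casimir0: "sharp P (H a 0) y = 0" if "y \<in> U" for a y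
    using casimir_poly_leading_coeff_casimir[OF casimir[OF that]] H_smooth cinf_on_differentiable[OF _ that]
    by blast
  have dZ: "(\<lambda>y. Z a y $ i) differentiable (at x)" if "x \<in> U" for a i x
    using Z_smooth cinf_on_differentiable[OF _ that] unfolding vfield_on_def by blast
  have bracket: "schouten Q P x i j k = (\<Sum>a\<in>UNIV. wedge3 (Xp a) (lie_bv (Z a) P) x i j k)"
    if x: "x \<in> U" for x i j k
    unfolding Q_def Xp_def
    by (rule schouten_hamiltonian_wedge_correction[where H = "\<lambda>a. H a 0", OF U_open x P P'])
      (use compatible x H_smooth casimir0 dZ[OF x] in auto)
  show ?thesis
    using bracket poisson_pencil_iff_schouten_eq_0[OF U_open Q_poisson P_poisson] by simp
qed

end
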